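(* If $G$ is a unicyclic graph of order $n\ge 3$, then $N(G)\ge \frac{n^2+3n-4}{2}$, with equality if and only if $G$ is isomorphic to the tadpole graph $G_{3,n-3}$.
   Context: A unicyclic graph is a connected finite simple graph containing exactly one cycle. $N(G)$ denotes the number of nonempty vertex sets $S\subseteq V(G)$ such that the induced subgraph $G[S]$ is connected. The tadpole graph $G_{p,q}$ is the graph of order $p+q$ obtained by identifying a vertex of the cycle $C_p$ with an endpoint of the path on $q+1$ vertices; in particular $G_{3,n-3}$ is obtained by identifying a vertex of a triangle $K_3$ with an endpoint of the path on $n-2$ vertices. *)

theory Defs
  imports Complex_Main
begin

definition simple_graph :: "'a set \<Rightarrow> 'a set set \<Rightarrow> bool" where
  "simple_graph V E \<longleftrightarrow> finite V \<and>
     (\<forall>e\<in>E. \<exists>u v. e = {u, v} \<and> u \<noteq> v \<and> u \<in> V \<and> v \<in> V)"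

definition adj_in :: "'a set set \<Rightarrow> 'a set \<Rightarrow> ('a \<times> 'a) set" where
  "adj_in E S = {(x, y). x \<in> S \<and> y \<in> S \<and> {x, y} \<in> E}"

definition connected_set :: "'a set set \<Rightarrow> 'a set \<Rightarrow> bool" where
  "connected_set E S \<longleftrightarrow> S \<noteq> {} \<and> (\<forall>u\<in>S. \<forall>v\<in>S. (u, v) \<in> (adj_in E S)\<^sup>*)"

definition N_conn :: "'a set \<Rightarrow> 'a set set \<Rightarrow> nat" where
  "N_conn V E = card {S. S \<subseteq> V \<and> connected_set E S}"

text \<open>A cycle of the graph, identified with its (nonempty, finite) edge set F \<subseteq> E:
  the subgraph formed by F is connected and every vertex on it has degree exactly 2.\<close>
definition is_cycle :: "'a set set \<Rightarrow> 'a set set \<Rightarrow> bool" where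
  "is_cycle E F \<longleftrightarrow> F \<subseteq> E \<and> F \<noteq> {} \<and> finite F \<and>
     connected_set F (\<Union>F) \<and> (\<forall>v\<in>\<Union>F. card {e\<in>F. v \<in> e} = 2)"

definition unicyclic :: "'a set \<Rightarrow> 'a set set \<Rightarrow> bool" where
  "unicyclic V E \<longleftrightarrow> simple_graph V E \<and> connected_set E V \<and> (\<exists>!F. is_cycle E F)"

text \<open>Tadpole graph G_{p,q} on vertices 0..p+q-1: cycle 0,1,...,p-1 and path p-1,p,...,p+q-1.\<close>
definition tadpole_V :: "nat \<Rightarrow> nat \<Rightarrow> nat set" where
  "tadpole_V p q = {0..<p+q}"

definition tadpole_E :: "nat \<Rightarrow> nat \<Rightarrow> nat set set" where
  "tadpole_E p q = {{i, (i + 1) mod p} | i. i < p} \<union> {{i, i + 1} | i. p - 1 \<le> i \<and> i + 1 < p + q}"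

definition graph_iso :: "'a set \<Rightarrow> 'a set set \<Rightarrow> 'b set \<Rightarrow> 'b set set \<Rightarrow> bool" where
  "graph_iso V E V' E' \<longleftrightarrow> (\<exists>f. bij_betw f V V' \<and>
     (\<forall>u\<in>V. \<forall>v\<in>V. {u, v} \<in> E \<longleftrightarrow> {f u, f v} \<in> E'))"

end

theory Submission
  imports Defs
begin

text \<open>Split the connected sets of G at a vertex w into those avoiding w and those containing w.
  In a connected graph on n vertices the latter include one of every size from 1 to n, and one more
  for every size that occurs twice; if the graph contains a cycle, some size always occurs twice.
  Deleting a non-cut vertex w off the cycle therefore gives N(G) \<ge> N(G - w) + n + 1, and induction
  on n yields the bound (a graph that is just a cycle satisfies it with equality for n = 3 and
  strictly for n \<ge> 4). In the case of equality, G - w is the tadpole G_{3,n-4} and w is a leaf whose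
  neighbour lies in the least possible number n of connected sets of G - w; in the tadpole only the
  end of the path does, because through a vertex with two neighbours there are two connected sets
  of size 2 and two of size 3.\<close>


section \<open>Connected vertex sets\<close>

lemma connected_set_singleton [simp]: "connected_set E {a}"
  unfolding connected_set_def by auto

lemma connected_set_mono_edges:
  assumes "F \<subseteq> E" "connected_set F S"
  shows "connected_set E S"
proof -
  have "adj_in F S \<subseteq> adj_in E S" using assms(1) unfolding adj_in_def by auto
  then show ?thesis using assms(2) rtrancl_mono unfolding connected_set_def by blast
qed

lemma connected_set_cong:
  assumes "\<And>x y. x \<in> S \<Longrightarrow> y \<in> S \<Longrightarrow> {x,y} \<in> E \<longleftrightarrow> {x,y} \<in> E'"
  shows "connected_set E S \<longleftrightarrow> connected_set E' S"
proof -
  have "adj_in E S = adj_in E' S" using assms unfolding adj_in_def by blast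
  then show ?thesis unfolding connected_set_def by simp
qed

lemma connected_set_insert:
  assumes conn: "connected_set E S" and "y \<in> S" "{x,y} \<in> E"
  shows "connected_set E (insert x S)"
proof -
  let ?R = "adj_in E (insert x S)"
  have "(adj_in E S)\<^sup>* \<subseteq> ?R\<^sup>*"
    by (rule rtrancl_mono) (auto simp: adj_in_def)
  then have inner: "(u, v) \<in> ?R\<^sup>*" if "u \<in> S" "v \<in> S" for u v
    using conn that unfolding connected_set_def by blast
  have "(x, y) \<in> ?R" "(y, x) \<in> ?R"
    using assms(2,3) by (auto simp: adj_in_def insert_commute)
  then have "(u, y) \<in> ?R\<^sup>*" "(y, u) \<in> ?R\<^sup>*" if "u \<in> insert x S" for u
    using that inner[OF _ \<open>y \<in> S\<close>] inner[OF \<open>y \<in> S\<close>] by auto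
  then show ?thesis
    unfolding connected_set_def by (blast intro: rtrancl_trans)
qed

lemma connected_set_edge:
  assumes "{x,y} \<in> E"
  shows "connected_set E {x,y}"
  using connected_set_insert[where S = "{y}" and y = y and x = x] assms by simp

lemma connected_set_clique:
  assumes "S \<noteq> {}" "\<And>x y. x \<in> S \<Longrightarrow> y \<in> S \<Longrightarrow> x \<noteq> y \<Longrightarrow> {x,y} \<in> E"
  shows "connected_set E S"
  unfolding connected_set_def
proof (intro conjI ballI)
  fix u v assume "u \<in> S" "v \<in> S"
  then show "(u, v) \<in> (adj_in E S)\<^sup>*"
    using assms(2)[of u v] by (cases "u = v") (auto simp: adj_in_def)
qed (rule assms(1))

lemma connected_set_crossing_edge:
  assumes "connected_set E V" "T \<subseteq> V" "T \<noteq> {}" "T \<noteq> V"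
  shows "\<exists>x\<in>V - T. \<exists>y\<in>T. {x,y} \<in> E"
proof -
  have leave: "b \<in> T \<or> (\<exists>x\<in>V - T. \<exists>y\<in>T. {x,y} \<in> E)"
    if "(a, b) \<in> (adj_in E V)\<^sup>*" "a \<in> T" for a b
    using that
  proof (induction rule: rtrancl_induct)
    case (step b c)
    then have "c \<in> V" "{c,b} \<in> E" by (auto simp: adj_in_def insert_commute)
    with step show ?case by blast
  qed simp
  obtain a b where "a \<in> T" "b \<in> V - T" using assms(2-4) by blast
  with assms(1,2) leave[of a b] show ?thesis unfolding connected_set_def by blast
qed

lemma connected_superset_of_card:
  assumes fin: "finite V" and conn: "connected_set E V"
    and S: "S \<subseteq> V" "connected_set E S" and k: "card S \<le> k" "k \<le> card V"
  shows "\<exists>T. S \<subseteq> T \<and> T \<subseteq> V \<and> connected_set E T \<and> card T = k"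
  using k
proof (induction k rule: dec_induct)
  case base
  then show ?case using S by blast
next
  case (step k)
  then obtain T where T: "S \<subseteq> T" "T \<subseteq> V" "connected_set E T" "card T = k" by auto
  then have "T \<noteq> V" "T \<noteq> {}" using step.prems S(2) by (auto simp: connected_set_def)
  then obtain x y where "x \<in> V - T" "y \<in> T" "{x,y} \<in> E"
    using connected_set_crossing_edge[OF conn T(2)] by blast
  moreover have "finite T" using T(2) fin finite_subset by blast
  ultimately show ?case
    using T connected_set_insert[OF T(3)] by (intro exI[of _ "insert x T"]) auto
qed

lemma exists_noncut_vertex:
  assumes fin: "finite V" and conn: "connected_set E V"
    and S: "S \<subseteq> V" "connected_set E S" "S \<noteq> V"
  shows "\<exists>w\<in>V - S. connected_set E (V - {w})"
proof -
  have lt: "card S < card V" using S fin by (meson psubsetI psubset_card_mono)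
  then have "card S \<le> card V - 1" by linarith
  then obtain T where T: "S \<subseteq> T" "T \<subseteq> V" "connected_set E T" "card T = card V - 1"
    using connected_superset_of_card[OF fin conn S(1,2), of "card V - 1"] by auto
  then have "card (V - T) = 1" using fin lt by (simp add: card_Diff_subset finite_subset)
  then obtain w where "V - T = {w}" by (meson card_1_singletonE)
  then have "T = V - {w}" "w \<in> V - S" using T(1,2) by auto
  then show ?thesis using T(3) by blast
qed

lemma connected_set_Diff_leaf:
  assumes conn: "connected_set E V" and "z \<in> V" "y \<noteq> z"
    and leaf: "\<And>x. x \<in> V \<Longrightarrow> {z,x} \<in> E \<Longrightarrow> x = y" and "V - {z} \<noteq> {}"
  shows "connected_set E (V - {z})"
proof -
  let ?R = "adj_in E (V - {z})"
  have walk: "(c \<noteq> z \<longrightarrow> (a, c) \<in> ?R\<^sup>*) \<and> (c = z \<longrightarrow> (a, y) \<in> ?R\<^sup>*)"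
    if "(a, c) \<in> (adj_in E V)\<^sup>*" "a \<noteq> z" for a c
    using that
  proof (induction rule: rtrancl_induct)
    case (step c d)
    then have cd: "c \<in> V" "d \<in> V" "{c,d} \<in> E" "{d,c} \<in> E"
      by (auto simp: adj_in_def insert_commute)
    show ?case
    proof (cases "c = z \<or> d = z")
      case True
      then show ?thesis using step leaf[of c] leaf[of d] \<open>y \<noteq> z\<close> cd by auto
    next
      case False
      then have "(c, d) \<in> ?R" using cd by (simp add: adj_in_def)
      then show ?thesis using step False by auto
    qed
  qed simp
  show ?thesis
    using conn assms(5) walk unfolding connected_set_def by blast
qed

lemma rtrancl_map:
  assumes "(a, b) \<in> R\<^sup>*" "\<And>x y. (x, y) \<in> R \<Longrightarrow> (g x, g y) \<in> R'"
  shows "(g a, g b) \<in> R'\<^sup>*"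
  using assms(1) by induction (auto intro: rtrancl_into_rtrancl assms(2))

lemma connected_set_image:
  assumes "connected_set E S" "\<And>u v. u \<in> S \<Longrightarrow> v \<in> S \<Longrightarrow> {u,v} \<in> E \<Longrightarrow> {f u, f v} \<in> E'"
  shows "connected_set E' (f ` S)"
proof -
  have "(f x, f y) \<in> adj_in E' (f ` S)" if "(x, y) \<in> adj_in E S" for x y
    using that assms(2) unfolding adj_in_def by auto
  then show ?thesis
    using assms(1) rtrancl_map[of _ _ "adj_in E S" f] unfolding connected_set_def by blast
qed

lemma connected_set_image_iff:
  assumes inj: "inj_on f V" and edges: "\<forall>u\<in>V. \<forall>v\<in>V. {u,v} \<in> E \<longleftrightarrow> {f u, f v} \<in> E'"
    and "S \<subseteq> V"
  shows "connected_set E' (f ` S) \<longleftrightarrow> connected_set E S"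
proof
  assume "connected_set E' (f ` S)"
  moreover have "{inv_into S f x, inv_into S f y} \<in> E"
    if "x \<in> f ` S" "y \<in> f ` S" "{x,y} \<in> E'" for x y
    using that edges \<open>S \<subseteq> V\<close> inj_on_subset[OF inj \<open>S \<subseteq> V\<close>] by (auto simp: inv_into_f_f subsetD)
  ultimately have "connected_set E (inv_into S f ` f ` S)" by (rule connected_set_image)
  then show "connected_set E S" using inj_on_subset[OF inj \<open>S \<subseteq> V\<close>] by simp
qed (erule connected_set_image, use edges \<open>S \<subseteq> V\<close> in blast)


section \<open>Counting connected supersets\<close>

definition conn_supersets :: "'a set \<Rightarrow> 'a set set \<Rightarrow> 'a set \<Rightarrow> 'a set set" where
  "conn_supersets V E S = {T. T \<subseteq> V \<and> connected_set E T \<and> S \<subseteq> T}"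

lemma N_conn_eq_card_conn_supersets: "N_conn V E = card (conn_supersets V E {})"
  unfolding N_conn_def conn_supersets_def by simp

lemma finite_conn_supersets: "finite V \<Longrightarrow> finite (conn_supersets V E S)"
  unfolding conn_supersets_def by (rule finite_subset[of _ "Pow V"]) auto

lemma card_conn_supersets_split:
  assumes "finite V"
  shows "card (conn_supersets V E S)
    = card (conn_supersets (V - {z}) E S) + card (conn_supersets V E (insert z S))"
proof -
  have "conn_supersets V E S = conn_supersets (V - {z}) E S \<union> conn_supersets V E (insert z S)"
    "conn_supersets (V - {z}) E S \<inter> conn_supersets V E (insert z S) = {}"
    unfolding conn_supersets_def by blast+
  then show ?thesis
    using assms by (simp add: card_Un_disjoint finite_conn_supersets)
qed

lemma conn_supersets_cong:
  assumes "\<And>x y. x \<in> V \<Longrightarrow> y \<in> V \<Longrightarrow> {x,y} \<in> E \<longleftrightarrow> {x,y} \<in> E'"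
  shows "conn_supersets V E S = conn_supersets V E' S"
proof -
  have "connected_set E T \<longleftrightarrow> connected_set E' T" if "T \<subseteq> V" for T
    by (rule connected_set_cong) (use assms that in blast)
  then show ?thesis unfolding conn_supersets_def by blast
qed

lemma N_conn_mono_edges:
  assumes "finite V" "F \<subseteq> E"
  shows "N_conn V F \<le> N_conn V E"
  unfolding N_conn_def using assms connected_set_mono_edges[of F E]
  by (intro card_mono) (auto intro: finite_subset[of _ "Pow V"])

lemma card_conn_supersets_iso:
  assumes bij: "bij_betw f V V'" and edges: "\<forall>u\<in>V. \<forall>v\<in>V. {u,v} \<in> E \<longleftrightarrow> {f u, f v} \<in> E'"
    and "S \<subseteq> V"
  shows "card (conn_supersets V' E' (f ` S)) = card (conn_supersets V E S)"
proof -
  have inj: "inj_on f V" and V': "V' = f ` V" using bij by (auto simp: bij_betw_def)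
  have "conn_supersets V' E' (f ` S) = image f ` conn_supersets V E S"
  proof (intro equalityI subsetI)
    fix T' assume "T' \<in> conn_supersets V' E' (f ` S)"
    then have T': "T' \<subseteq> f ` V" "connected_set E' T'" "f ` S \<subseteq> T'"
      unfolding conn_supersets_def V' by auto
    define T where "T = inv_into V f ` T'"
    have "T \<subseteq> V" "f ` T = T'" using T'(1) unfolding T_def
      by (auto simp: image_inv_into_cancel inv_into_into)
    moreover have "S \<subseteq> T"
      using T'(3) \<open>S \<subseteq> V\<close> inj unfolding T_def by (force simp: inv_into_f_f)
    ultimately show "T' \<in> image f ` conn_supersets V E S"
      using T'(2) connected_set_image_iff[OF inj edges \<open>T \<subseteq> V\<close>]
      unfolding conn_supersets_def by blast
  qed (use connected_set_image_iff[OF inj edges] V' in \<open>auto simp: conn_supersets_def\<close>)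
  moreover have "inj_on (image f) (conn_supersets V E S)"
    by (rule inj_on_image, rule inj_on_subset[OF inj]) (auto simp: conn_supersets_def)
  ultimately show ?thesis by (simp add: card_image)
qed

lemma N_conn_iso:
  assumes "graph_iso V E V' E'"
  shows "N_conn V E = N_conn V' E'"
  using assms card_conn_supersets_iso[of _ V V' E E' "{}"]
  unfolding graph_iso_def N_conn_eq_card_conn_supersets by auto

lemma card_conn_supersets_lower_bound:
  assumes fin: "finite V" and conn: "connected_set E V" and S: "S \<subseteq> V" "connected_set E S"
    and D: "D \<subseteq> {card S..card V}"
    and doubled: "\<And>k. k \<in> D \<Longrightarrow> \<exists>T1\<in>conn_supersets V E S. \<exists>T2\<in>conn_supersets V E S.
                                   T1 \<noteq> T2 \<and> card T1 = k \<and> card T2 = k"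
  shows "card V - card S + 1 + card D \<le> card (conn_supersets V E S)"
proof -
  define A where "A k = {T \<in> conn_supersets V E S. card T = k}" for k
  define I where "I = {card S..card V}"
  have finA: "finite (A k)" for k
    unfolding A_def using finite_conn_supersets[OF fin] by simp
  have one: "1 \<le> card (A k)" if k: "k \<in> I" for k
  proof -
    obtain T where "S \<subseteq> T" "T \<subseteq> V" "connected_set E T" "card T = k"
      using connected_superset_of_card[OF fin conn S] k unfolding I_def by auto
    then have "T \<in> A k" unfolding A_def conn_supersets_def by simp
    then have "A k \<noteq> {}" by blast
    then show ?thesis using finA[of k] by (simp add: Suc_le_eq card_gt_0_iff)
  qed
  have two: "2 \<le> card (A k)" if k: "k \<in> D" for k
  proof -
    obtain T1 T2 where "T1 \<in> A k" "T2 \<in> A k" "T1 \<noteq> T2"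
      using doubled[OF k] unfolding A_def by blast
    then show ?thesis using card_mono[OF finA, of "{T1,T2}" k] by simp
  qed
  have "card I = card V - card S + 1"
    using card_mono[OF fin S(1)] unfolding I_def by simp
  moreover have "card D \<le> card I"
    using D unfolding I_def by (intro card_mono) auto
  moreover have "card (I - D) = card I - card D"
    using D unfolding I_def by (meson card_Diff_subset finite_atLeastAtMost finite_subset)
  ultimately have "card V - card S + 1 + card D = card (I - D) + 2 * card D" by linarith
  also have "\<dots> = (\<Sum>k\<in>I - D. 1) + (\<Sum>k\<in>D. 2)" by simp
  also have "\<dots> \<le> (\<Sum>k\<in>I - D. card (A k)) + (\<Sum>k\<in>D. card (A k))"
    using one two by (intro add_mono sum_mono) auto
  also have "\<dots> = (\<Sum>k\<in>I. card (A k))"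
    using sum.subset_diff[OF D, of "\<lambda>k. card (A k)"] unfolding I_def by simp
  also have "\<dots> = card (\<Union>k\<in>I. A k)"
    by (rule card_UN_disjoint[symmetric]) (auto simp: I_def finA, auto simp: A_def)
  also have "\<dots> \<le> card (conn_supersets V E S)"
    by (rule card_mono[OF finite_conn_supersets[OF fin]]) (auto simp: A_def)
  finally show ?thesis .
qed

lemma card_conn_supersets_leaf:
  assumes fin: "finite V" and "z \<in> V" "y \<in> V" "y \<noteq> z" "{z,y} \<in> E"
    and leaf: "\<And>x. x \<in> V \<Longrightarrow> {z,x} \<in> E \<Longrightarrow> x = y"
  shows "card (conn_supersets V E {z}) = 1 + card (conn_supersets (V - {z}) E {y})"
proof -
  let ?A = "conn_supersets V E {z}" and ?B = "conn_supersets (V - {z}) E {y}"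
  have "?A = insert {z} (insert z ` ?B)"
  proof (intro equalityI subsetI)
    fix T assume T: "T \<in> ?A"
    show "T \<in> insert {z} (insert z ` ?B)"
    proof (cases "T = {z}")
      case False
      have TV: "T \<subseteq> V" and conn: "connected_set E T" and "z \<in> T"
        using T unfolding conn_supersets_def by auto
      then obtain x where "x \<in> T - {z}" "{x,z} \<in> E"
        using connected_set_crossing_edge[OF conn, of "{z}"] False by blast
      then have "y \<in> T" using leaf[of x] TV by (auto simp: insert_commute)
      moreover have "connected_set E (T - {z})"
        by (rule connected_set_Diff_leaf[OF conn \<open>z \<in> T\<close> \<open>y \<noteq> z\<close>])
          (use leaf TV \<open>x \<in> T - {z}\<close> in auto)
      ultimately have "T - {z} \<in> ?B"
        using TV \<open>y \<noteq> z\<close> unfolding conn_supersets_def by blast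
      moreover have "T = insert z (T - {z})" using \<open>z \<in> T\<close> by blast
      ultimately show ?thesis by blast
    qed simp
  next
    fix T assume "T \<in> insert {z} (insert z ` ?B)"
    then consider "T = {z}" | T' where "T' \<in> ?B" "T = insert z T'" by blast
    then show "T \<in> ?A"
    proof cases
      case 2
      then have "connected_set E T"
        using connected_set_insert[of E T' y z] assms(5) unfolding conn_supersets_def by auto
      then show ?thesis using 2 \<open>z \<in> V\<close> unfolding conn_supersets_def by auto
    qed (use \<open>z \<in> V\<close> in \<open>simp add: conn_supersets_def\<close>)
  qed
  moreover have "inj_on (insert z) ?B" "{z} \<notin> insert z ` ?B"
    using \<open>y \<noteq> z\<close> unfolding conn_supersets_def inj_on_def by blast+
  ultimately show ?thesis
    using fin by (simp add: card_image finite_conn_supersets)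
qed

lemma N_conn_lower_bound:
  assumes "finite V" "connected_set E V"
  shows "card V * (card V + 1) \<le> 2 * N_conn V E"
  using assms
proof (induction "card V" arbitrary: V)
  case (Suc m)
  obtain v where v: "v \<in> V" using Suc.prems(2) unfolding connected_set_def by auto
  show ?case
  proof (cases "V = {v}")
    case True
    then have "conn_supersets V E {} = {{v}}"
      unfolding conn_supersets_def connected_set_def by auto
    then show ?thesis using True by (simp add: N_conn_eq_card_conn_supersets)
  next
    case False
    then obtain w where w: "w \<in> V" "connected_set E (V - {w})"
      using exists_noncut_vertex[OF Suc.prems, of "{v}"] v by auto
    have "card (V - {w}) = m" using Suc.hyps(2) Suc.prems(1) w(1) by simp
    then have "m * (m + 1) \<le> 2 * N_conn (V - {w}) E"
      using Suc.hyps(1)[of "V - {w}"] Suc.prems(1) w(2) by simp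
    moreover have "card V - card {w} + 1 + card ({}::nat set) \<le> card (conn_supersets V E {w})"
      by (rule card_conn_supersets_lower_bound) (use Suc.prems w in auto)
    moreover have "N_conn V E = N_conn (V - {w}) E + card (conn_supersets V E {w})"
      using card_conn_supersets_split[OF Suc.prems(1), of E "{}" w]
      by (simp add: N_conn_eq_card_conn_supersets)
    ultimately show ?thesis using Suc.hyps(2)[symmetric] by (simp add: algebra_simps)
  qed
qed simp

lemma card_conn_supersets_two_neighbours:
  assumes fin: "finite V" and conn: "connected_set E V" and "4 \<le> card V"
    and "x \<in> V" "a \<in> V" "b \<in> V" "a \<noteq> b" "a \<noteq> x" "b \<noteq> x" "{x,a} \<in> E" "{x,b} \<in> E"
  shows "card V + 2 \<le> card (conn_supersets V E {x})"
proof -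
  have xa: "connected_set E {x,a}" by (rule connected_set_edge[OF assms(10)])
  have xb: "connected_set E {x,b}" by (rule connected_set_edge[OF assms(11)])
  have xab: "connected_set E {b,x,a}"
    using connected_set_insert[OF xa, of x b] assms(11) by (simp add: insert_commute)
  have sub: "{b,x,a} \<subseteq> V" using assms(4-6) by blast
  have "card {b,x,a} < card V" using assms(3,7-9) by simp
  then have "{b,x,a} \<noteq> V" by auto
  then obtain c t where c: "c \<in> V" "c \<notin> {b,x,a}" "t \<in> {b,x,a}" "{c,t} \<in> E"
    using connected_set_crossing_edge[OF conn sub] by blast
  define u where "u = (if t = b then b else a)"
  have "t \<in> {x,u}" "connected_set E {x,u}" using c(3) xa xb unfolding u_def by auto
  then have xuc: "connected_set E {c,x,u}"
    using connected_set_insert[of E "{x,u}" t c] c(4) by blast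
  have "card V - card {x} + 1 + card {2,3::nat} \<le> card (conn_supersets V E {x})"
  proof (rule card_conn_supersets_lower_bound[OF fin conn])
    fix k :: nat assume "k \<in> {2,3}"
    then consider "k = 2" | "k = 3" by blast
    then show "\<exists>T1\<in>conn_supersets V E {x}. \<exists>T2\<in>conn_supersets V E {x}.
                 T1 \<noteq> T2 \<and> card T1 = k \<and> card T2 = k"
    proof cases
      case 1
      have "{x,a} \<in> conn_supersets V E {x}" "{x,b} \<in> conn_supersets V E {x}"
        using xa xb assms(4-6) by (auto simp: conn_supersets_def)
      moreover have "{x,a} \<noteq> {x,b}" "card {x,a} = 2" "card {x,b} = 2"
        using assms(7-9) by (auto simp: doubleton_eq_iff)
      ultimately show ?thesis using 1 by (intro bexI[of _ "{x,a}"] bexI[of _ "{x,b}"]) auto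
    next
      case 2
      have "u \<in> V" "u \<noteq> x" using assms(5,6,8,9) unfolding u_def by auto
      then have "{b,x,a} \<in> conn_supersets V E {x}" "{c,x,u} \<in> conn_supersets V E {x}"
        using xab xuc sub c(1) by (auto simp: conn_supersets_def)
      moreover have "{b,x,a} \<noteq> {c,x,u}" using c(2) by blast
      moreover have "card {b,x,a} = 3" "card {c,x,u} = 3"
        using assms(7-9) c(2) \<open>u \<noteq> x\<close> unfolding u_def by auto
      ultimately show ?thesis using 2 by (intro bexI[of _ "{b,x,a}"] bexI[of _ "{c,x,u}"]) auto
    qed
  qed (use assms(3,4) in auto)
  then show ?thesis by simp
qed


section \<open>Simple graphs and cycles\<close>

lemma simple_graph_finite: "simple_graph V E \<Longrightarrow> finite V"
  unfolding simple_graph_def by simp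

lemma simple_graph_edgeD:
  assumes "simple_graph V E" "{x,y} \<in> E"
  shows "x \<noteq> y" "x \<in> V" "y \<in> V"
  using assms unfolding simple_graph_def by (auto simp: doubleton_eq_iff)

lemma simple_graph_edge_other:
  assumes "simple_graph V E" "e \<in> E" "v \<in> e"
  shows "\<exists>a. e = {v,a} \<and> a \<noteq> v"
proof -
  obtain x y where e: "e = {x,y}" "x \<noteq> y" using assms(1,2) unfolding simple_graph_def by blast
  show ?thesis
  proof (cases "v = x")
    case True
    then show ?thesis using e by (intro exI[of _ y]) auto
  next
    case False
    then have "v = y" using e assms(3) by blast
    then show ?thesis using e by (intro exI[of _ x]) (auto simp: doubleton_eq_iff)
  qed
qed

lemma conn_supersets_few_imp_leaf:
  assumes sg: "simple_graph V E" and conn: "connected_set E V" and "4 \<le> card V" "w \<in> V"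
    and few: "card (conn_supersets V E {w}) < card V + 2"
  obtains x where "x \<in> V - {w}" "\<forall>y\<in>V. {w,y} \<in> E \<longleftrightarrow> y = x"
proof -
  have "{w} \<noteq> V" using \<open>4 \<le> card V\<close> by auto
  then have "\<exists>x\<in>V - {w}. \<exists>y\<in>{w}. {x,y} \<in> E"
    using \<open>w \<in> V\<close> by (intro connected_set_crossing_edge[OF conn]) auto
  then obtain x where x: "x \<in> V - {w}" "{x,w} \<in> E" by auto
  have xw: "{w,x} \<in> E" using x(2) by (simp add: insert_commute)
  have "y = x" if y: "y \<in> V" "{w,y} \<in> E" for y
  proof (rule ccontr)
    assume "y \<noteq> x"
    have "card V + 2 \<le> card (conn_supersets V E {w})"
      by (rule card_conn_supersets_two_neighbours[OF simple_graph_finite[OF sg] conn _ \<open>w \<in> V\<close> _ y(1)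
            _ _ _ xw y(2)])
        (use x \<open>4 \<le> card V\<close> \<open>y \<noteq> x\<close> simple_graph_edgeD(1)[OF sg y(2)] in auto)
    then show False using few by simp
  qed
  then show ?thesis using that x(1) xw by blast
qed

lemma is_cycleD:
  assumes "is_cycle E F"
  shows "F \<subseteq> E" "F \<noteq> {}" "connected_set F (\<Union>F)" "\<And>v. v \<in> \<Union>F \<Longrightarrow> card {e\<in>F. v \<in> e} = 2"
  using assms unfolding is_cycle_def by (simp_all only:) blast+

lemma is_cycle_mono_edges:
  assumes "is_cycle E F" "F \<subseteq> E'"
  shows "is_cycle E' F"
  using assms unfolding is_cycle_def by (elim conjE) (intro conjI)

lemma cycle_subset:
  assumes "simple_graph V E" "is_cycle E F"
  shows "\<Union>F \<subseteq> V"
proof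
  fix v assume "v \<in> \<Union>F"
  then obtain e where "e \<in> E" "v \<in> e" using is_cycleD(1)[OF assms(2)] by blast
  then obtain a where "{v,a} \<in> E" using simple_graph_edge_other[OF assms(1)] by metis
  then show "v \<in> V" using simple_graph_edgeD[OF assms(1)] by blast
qed

lemma cycle_neighbours:
  assumes sg: "simple_graph V E" and cyc: "is_cycle E F" and "v \<in> \<Union>F"
  obtains a b where "a \<noteq> b" "a \<noteq> v" "b \<noteq> v" "\<And>s. {v,s} \<in> F \<longleftrightarrow> s = a \<or> s = b"
proof -
  have "card {e\<in>F. v \<in> e} = 2" using is_cycleD(4)[OF cyc assms(3)] .
  then obtain e1 e2 where e12: "{e\<in>F. v \<in> e} = {e1,e2}" "e1 \<noteq> e2"
    unfolding card_2_iff by blast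
  have "e1 \<in> {e\<in>F. v \<in> e}" "e2 \<in> {e\<in>F. v \<in> e}" unfolding e12(1) by simp_all
  then have "e1 \<in> E" "v \<in> e1" "e2 \<in> E" "v \<in> e2"
    using is_cycleD(1)[OF cyc] by auto
  obtain a where a: "e1 = {v,a}" "a \<noteq> v"
    using simple_graph_edge_other[OF sg \<open>e1 \<in> E\<close> \<open>v \<in> e1\<close>] by (elim exE conjE)
  obtain b where b: "e2 = {v,b}" "b \<noteq> v"
    using simple_graph_edge_other[OF sg \<open>e2 \<in> E\<close> \<open>v \<in> e2\<close>] by (elim exE conjE)
  have nb: "{v,s} \<in> F \<longleftrightarrow> s = a \<or> s = b" for s
  proof -
    have "{v,s} \<in> F \<longleftrightarrow> {v,s} \<in> {e\<in>F. v \<in> e}" by simp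
    also have "\<dots> \<longleftrightarrow> {v,s} = e1 \<or> {v,s} = e2" unfolding e12(1) by simp
    finally have "{v,s} \<in> F \<longleftrightarrow> {v,s} = e1 \<or> {v,s} = e2" .
    then show ?thesis using a b by (auto simp: doubleton_eq_iff)
  qed
  have "a \<noteq> b" using a b e12(2) by auto
  show ?thesis by (rule that[of a b]) (use a b nb \<open>a \<noteq> b\<close> in auto)
qed

lemma cycle_card:
  assumes sg: "simple_graph V E" and cyc: "is_cycle E F"
  shows "3 \<le> card (\<Union>F)"
proof -
  obtain e where "e \<in> F" using is_cycleD(2)[OF cyc] by blast
  moreover obtain v w where "e = {v,w}"
    using is_cycleD(1)[OF cyc] \<open>e \<in> F\<close> sg unfolding simple_graph_def by blast
  ultimately have v: "v \<in> \<Union>F" by blast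
  obtain a b where "a \<noteq> b" "a \<noteq> v" "b \<noteq> v" and nb: "\<And>s. {v,s} \<in> F \<longleftrightarrow> s = a \<or> s = b"
    using cycle_neighbours[OF sg cyc v] by blast
  then have sub: "{v,a,b} \<subseteq> \<Union>F" and "card {v,a,b} = 3" using v nb[of a] nb[of b] by auto
  moreover have "finite (\<Union>F)"
    using cycle_subset[OF sg cyc] simple_graph_finite[OF sg] finite_subset by blast
  ultimately show ?thesis using card_mono[OF _ sub] by simp
qed

text \<open>No cycle edge leaves the triangle: each of its vertices already has both cycle neighbours
  in it.\<close>
lemma cycle_triangle:
  assumes sg: "simple_graph V E" and cyc: "is_cycle E F"
    and "{a,b} \<in> F" "{b,c} \<in> F" "{c,a} \<in> F" "a \<noteq> b" "b \<noteq> c" "c \<noteq> a"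
  shows "\<Union>F = {a,b,c}"
proof (rule ccontr)
  let ?T = "{a,b,c}"
  have closed: "s \<in> ?T" if t: "t \<in> ?T" and ts: "{t,s} \<in> F" for s t
  proof -
    have "t \<in> \<Union>F" using t assms(3-5) by blast
    then obtain p r where nb: "\<And>s. {t,s} \<in> F \<longleftrightarrow> s = p \<or> s = r"
      using cycle_neighbours[OF sg cyc] by blast
    have "{b,a} \<in> F" "{c,b} \<in> F" "{a,c} \<in> F" using assms(3-5) by (simp_all add: insert_commute)
    with t assms(3-8) obtain u1 u2 where "u1 \<noteq> u2" "u1 \<in> ?T" "u2 \<in> ?T" "{t,u1} \<in> F" "{t,u2} \<in> F"
      by (elim insertE emptyE) blast+
    then have "p \<in> ?T" "r \<in> ?T" using nb[of u1] nb[of u2] by auto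
    then show ?thesis using nb[of s] ts by auto
  qed
  assume "\<Union>F \<noteq> ?T"
  moreover have "?T \<subseteq> \<Union>F" using assms(3,4) by blast
  moreover have "connected_set F (\<Union>F)" using is_cycleD(3)[OF cyc] .
  ultimately obtain s t where "s \<in> \<Union>F - ?T" "t \<in> ?T" "{s,t} \<in> F"
    using connected_set_crossing_edge[of F "\<Union>F" ?T] by blast
  then show False using closed[of t s] by (simp add: insert_commute)
qed

text \<open>Take a smallest connected set T through w that meets the cycle. It meets the cycle in a single
  vertex v (otherwise a non-cut vertex of T other than w could be removed), so adding either cycle
  neighbour of v to T gives two different connected sets of the same size.\<close>
lemma conn_supersets_doubled_size:
  assumes sg: "simple_graph V E" and conn: "connected_set E V" and cyc: "is_cycle E F" and "w \<in> V"
  shows "\<exists>T1\<in>conn_supersets V E {w}. \<exists>T2\<in>conn_supersets V E {w}. T1 \<noteq> T2 \<and> card T1 = card T2"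
proof -
  let ?C = "\<Union>F"
  have fin: "finite V" using simple_graph_finite[OF sg] .
  have CV: "?C \<subseteq> V" using cycle_subset[OF sg cyc] .
  have "?C \<noteq> {}" using cycle_card[OF sg cyc] by (metis card.empty not_numeral_le_zero)
  define P where "P T \<longleftrightarrow> T \<in> conn_supersets V E {w} \<and> T \<inter> ?C \<noteq> {}" for T
  have "P V" using conn \<open>w \<in> V\<close> CV \<open>?C \<noteq> {}\<close> unfolding P_def conn_supersets_def by auto
  then obtain T where "P T" and min: "\<And>T'. P T' \<Longrightarrow> card T \<le> card T'"
    using ex_has_least_nat[of P V card] by blast
  then have T: "T \<subseteq> V" "connected_set E T" "w \<in> T" "T \<inter> ?C \<noteq> {}"
    unfolding P_def conn_supersets_def by auto
  have finT: "finite T" using T(1) fin finite_subset by blast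
  obtain v where v: "T \<inter> ?C = {v}"
  proof (cases "T = {w}")
    case True
    then show ?thesis using that T(4) by blast
  next
    case False
    then obtain u where u: "u \<in> T" "u \<noteq> w" "connected_set E (T - {u})"
      using exists_noncut_vertex[OF finT T(2), of "{w}"] T(3) by auto
    have "T - {u} \<in> conn_supersets V E {w}"
      using u T(1,3) by (auto simp: conn_supersets_def)
    moreover have "card (T - {u}) < card T" by (rule card_Diff1_less[OF finT u(1)])
    ultimately have "(T - {u}) \<inter> ?C = {}" using min[of "T - {u}"] unfolding P_def by linarith
    then have "T \<inter> ?C = {u}" using T(4) by blast
    then show ?thesis using that by blast
  qed
  then have "v \<in> ?C" "v \<in> T" by auto
  then obtain a b where "a \<noteq> b" "a \<noteq> v" "b \<noteq> v" and nb: "\<And>s. {v,s} \<in> F \<longleftrightarrow> s = a \<or> s = b"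
    using cycle_neighbours[OF sg cyc] by blast
  then have "{v,a} \<in> F" "{v,b} \<in> F" by auto
  then have ab: "a \<in> ?C" "b \<in> ?C" "{a,v} \<in> E" "{b,v} \<in> E"
    using is_cycleD(1)[OF cyc] by (auto simp: insert_commute)
  then have "a \<notin> T" "b \<notin> T" using v \<open>a \<noteq> v\<close> \<open>b \<noteq> v\<close> by auto
  have "insert a T \<in> conn_supersets V E {w}" "insert b T \<in> conn_supersets V E {w}"
    using connected_set_insert[OF T(2) \<open>v \<in> T\<close>] ab CV T(1,3) by (auto simp: conn_supersets_def)
  moreover have "insert a T \<noteq> insert b T" using \<open>a \<notin> T\<close> \<open>a \<noteq> b\<close> by blast
  moreover have "card (insert a T) = card (insert b T)" using \<open>a \<notin> T\<close> \<open>b \<notin> T\<close> finT by simp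
  ultimately show ?thesis by (intro bexI[of _ "insert a T"] bexI[of _ "insert b T"]) auto
qed

lemma card_conn_supersets_cycle_graph:
  assumes sg: "simple_graph V E" and conn: "connected_set E V" and cyc: "is_cycle E F" and "w \<in> V"
  shows "card V + 1 \<le> card (conn_supersets V E {w})"
proof -
  have fin: "finite V" using simple_graph_finite[OF sg] .
  obtain T1 T2 where T: "T1 \<in> conn_supersets V E {w}" "T2 \<in> conn_supersets V E {w}"
    "T1 \<noteq> T2" "card T1 = card T2"
    using conn_supersets_doubled_size[OF assms] by blast
  then have "w \<in> T1" "T1 \<subseteq> V" unfolding conn_supersets_def by auto
  then have "1 \<le> card T1" "card T1 \<le> card V"
    using fin by (auto simp: card_mono card_gt_0_iff Suc_le_eq finite_subset)
  have "card V - card {w} + 1 + card {card T1} \<le> card (conn_supersets V E {w})"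
  proof (rule card_conn_supersets_lower_bound[OF fin conn])
    show "{card T1} \<subseteq> {card {w}..card V}" using \<open>1 \<le> card T1\<close> \<open>card T1 \<le> card V\<close> by simp
  qed (use T \<open>w \<in> V\<close> in auto)
  then show ?thesis using \<open>card T1 \<le> card V\<close> \<open>1 \<le> card T1\<close> by simp
qed

lemma cycle_graph_triangle_complete:
  assumes sg: "simple_graph V E" and cyc: "is_cycle E F" and VC: "\<Union>F = V" and "card V = 3"
    and "a \<in> V" "b \<in> V"
  shows "{a,b} \<in> E \<longleftrightarrow> a \<noteq> b"
proof
  assume "a \<noteq> b"
  obtain p r where "p \<noteq> r" "p \<noteq> a" "r \<noteq> a" and nb: "\<And>s. {a,s} \<in> F \<longleftrightarrow> s = p \<or> s = r"
    using cycle_neighbours[OF sg cyc] \<open>a \<in> V\<close> VC by blast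
  then have sub: "{p,r} \<subseteq> V - {a}" using VC by blast
  have "card (V - {a}) = 2" using assms(4,5) by simp
  moreover have "card {p,r} = 2" using \<open>p \<noteq> r\<close> by simp
  ultimately have "{p,r} = V - {a}"
    using card_subset_eq[OF _ sub] simple_graph_finite[OF sg] by simp
  then have "b = p \<or> b = r" using \<open>b \<in> V\<close> \<open>a \<noteq> b\<close> by blast
  then show "{a,b} \<in> E" using nb is_cycleD(1)[OF cyc] by blast
qed (use simple_graph_edgeD[OF sg] in blast)

lemma cycle_graph_adjacent_noncut:
  assumes sg: "simple_graph V E" and cyc: "is_cycle E F" and VC: "\<Union>F = V" and n: "4 \<le> card V"
  obtains w x y x' where "{w,x} \<in> F" "{w,y} \<in> F" "{x,x'} \<in> F"
    "x \<noteq> w" "y \<noteq> w" "y \<noteq> x" "x' \<noteq> w" "x' \<noteq> x" "x' \<noteq> y"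
    "connected_set F (V - {w})" "connected_set F (V - {x})"
proof -
  have fin: "finite V" using simple_graph_finite[OF sg] .
  have cF: "connected_set F V" using is_cycleD(3)[OF cyc] VC by simp
  obtain v0 where "v0 \<in> V" using n by fastforce
  moreover have "{v0} \<noteq> V" using n by auto
  ultimately obtain w where w: "w \<in> V" "connected_set F (V - {w})"
    using exists_noncut_vertex[OF fin cF, of "{v0}"] by auto
  obtain x y where "x \<noteq> y" "x \<noteq> w" "y \<noteq> w" and nbw: "\<And>s. {w,s} \<in> F \<longleftrightarrow> s = x \<or> s = y"
    using cycle_neighbours[OF sg cyc] w(1) VC by blast
  then have "{w,x} \<in> F" "{w,y} \<in> F" "x \<in> V" "y \<in> V" using VC by auto
  obtain p r where "p \<noteq> r" "p \<noteq> x" "r \<noteq> x" and nbx: "\<And>s. {x,s} \<in> F \<longleftrightarrow> s = p \<or> s = r"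
    using cycle_neighbours[OF sg cyc] \<open>x \<in> V\<close> VC by blast
  define x' where "x' = (if p = w then r else p)"
  have "{x,w} \<in> F" using \<open>{w,x} \<in> F\<close> by (simp add: insert_commute)
  then have nbx': "{x,s} \<in> F \<longleftrightarrow> s = w \<or> s = x'" for s
    using nbx[of s] nbx[of w] \<open>p \<noteq> r\<close> unfolding x'_def by auto
  have "x' \<noteq> w" "x' \<noteq> x" "{x,x'} \<in> F"
    using nbx[of w] \<open>p \<noteq> r\<close> \<open>p \<noteq> x\<close> \<open>r \<noteq> x\<close> nbx' unfolding x'_def by auto
  have "x' \<noteq> y"
  proof
    assume "x' = y"
    then have "\<Union>F = {w,x,y}"
      using cycle_triangle[OF sg cyc \<open>{w,x} \<in> F\<close> \<open>{x,x'} \<in> F\<close>] \<open>{w,y} \<in> F\<close>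
        \<open>x \<noteq> w\<close> \<open>x \<noteq> y\<close> \<open>y \<noteq> w\<close> by (simp add: insert_commute)
    then have "card V = 3" using VC \<open>x \<noteq> w\<close> \<open>x \<noteq> y\<close> \<open>y \<noteq> w\<close> by auto
    then show False using n by simp
  qed
  have "connected_set F (V - {w} - {x})"
  proof (rule connected_set_Diff_leaf[OF w(2)])
    show "x \<in> V - {w}" "x' \<noteq> x" "V - {w} - {x} \<noteq> {}"
      using \<open>x \<in> V\<close> \<open>x \<noteq> w\<close> \<open>x' \<noteq> x\<close> \<open>y \<in> V\<close> \<open>x \<noteq> y\<close> \<open>y \<noteq> w\<close> by auto
  qed (use nbx' in blast)
  then have "connected_set F (insert w (V - {w} - {x}))"
    using connected_set_insert[of F _ y w] \<open>{w,y} \<in> F\<close> \<open>y \<in> V\<close> \<open>x \<noteq> y\<close> \<open>y \<noteq> w\<close> by blast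
  moreover have "insert w (V - {w} - {x}) = V - {x}" using w(1) \<open>x \<noteq> w\<close> by blast
  ultimately have "connected_set F (V - {x})" by simp
  then show ?thesis
    using that \<open>{w,x} \<in> F\<close> \<open>{w,y} \<in> F\<close> \<open>{x,x'} \<in> F\<close> \<open>x \<noteq> w\<close> \<open>y \<noteq> w\<close> \<open>x \<noteq> y\<close>
      \<open>x' \<noteq> w\<close> \<open>x' \<noteq> x\<close> \<open>x' \<noteq> y\<close> w(2) by blast
qed

text \<open>Split the connected sets of a cycle of length n at a vertex w and its neighbour x: those
  avoiding w induce a path (at least n(n-1)/2 of them), those containing w but not x are at least
  n-1, and those containing both are at least n, because the size 3 occurs twice.\<close>
lemma N_conn_cycle_graph_lower_bound:
  assumes sg: "simple_graph V E" and cyc: "is_cycle E F" and VC: "\<Union>F = V" and n: "4 \<le> card V"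
  shows "card V * card V + 3 * card V \<le> 2 * N_conn V E + 2"
proof -
  have fin: "finite V" using simple_graph_finite[OF sg] .
  obtain w x y x' where F: "{w,x} \<in> F" "{w,y} \<in> F" "{x,x'} \<in> F"
    and ne: "x \<noteq> w" "y \<noteq> w" "y \<noteq> x" "x' \<noteq> w" "x' \<noteq> x" "x' \<noteq> y"
    and conn: "connected_set F (V - {w})" "connected_set F (V - {x})"
    using cycle_graph_adjacent_noncut[OF assms] by blast
  have V: "w \<in> V" "x \<in> V" "y \<in> V" "x' \<in> V" using F VC by auto
  have cV: "connected_set F V" using is_cycleD(3)[OF cyc] VC by simp
  have xw: "connected_set F {x,w}" using connected_set_edge F(1) by (simp add: insert_commute)
  have "N_conn V F = N_conn (V - {w}) F + card (conn_supersets (V - {x}) F {w})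
      + card (conn_supersets V F {x,w})"
    using card_conn_supersets_split[OF fin, of F "{}" w] card_conn_supersets_split[OF fin, of F "{w}" x]
    by (simp add: N_conn_eq_card_conn_supersets)
  moreover have "(card V - 1) * (card V - 1 + 1) \<le> 2 * N_conn (V - {w}) F"
    using N_conn_lower_bound[of "V - {w}" F] fin conn(1) V(1) by simp
  moreover have "card (V - {x}) - card {w} + 1 + card ({}::nat set)
      \<le> card (conn_supersets (V - {x}) F {w})"
    by (rule card_conn_supersets_lower_bound) (use fin conn(2) V ne in auto)
  moreover have "card V - card {x,w} + 1 + card {3::nat} \<le> card (conn_supersets V F {x,w})"
  proof (rule card_conn_supersets_lower_bound[OF fin cV])
    have "connected_set F {y,x,w}" "connected_set F {x',x,w}"
      using connected_set_insert[OF xw, of w y] connected_set_insert[OF xw, of x x'] F(2,3)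
      by (simp_all add: insert_commute)
    moreover have "{y,x,w} \<noteq> {x',x,w}" "card {y,x,w} = 3" "card {x',x,w} = 3"
      using ne by auto
    ultimately show "\<exists>T1\<in>conn_supersets V F {x,w}. \<exists>T2\<in>conn_supersets V F {x,w}.
        T1 \<noteq> T2 \<and> card T1 = k \<and> card T2 = k" if "k \<in> {3}" for k
      using that V by (intro bexI[of _ "{y,x,w}"] bexI[of _ "{x',x,w}"]) (auto simp: conn_supersets_def)
  qed (use V ne n xw in auto)
  moreover have "N_conn V F \<le> N_conn V E" using N_conn_mono_edges[OF fin is_cycleD(1)[OF cyc]] .
  moreover have "card (V - {x}) = card V - 1" "card {x,w} = 2" using fin V ne by auto
  ultimately show ?thesis using n by (simp add: algebra_simps)
qed


section \<open>Tadpole graphs\<close>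

lemma tadpole_V_3: "tadpole_V 3 q = {0..<q+3}"
  by (simp add: tadpole_V_def add.commute)

lemma tadpole_E_3_iff:
  "{x,y} \<in> tadpole_E 3 q \<longleftrightarrow>
    x \<noteq> y \<and> (x < 3 \<and> y < 3 \<or> 2 \<le> min x y \<and> max x y < q + 3 \<and> (y = x + 1 \<or> x = y + 1))"
proof -
  have triangle: "(\<exists>i. {x,y} = {i, (i+1) mod 3} \<and> i < 3) \<longleftrightarrow> x \<noteq> y \<and> x < 3 \<and> y < 3"
  proof
    assume "\<exists>i. {x,y} = {i, (i+1) mod 3} \<and> i < 3"
    then obtain i where i: "{x,y} = {i, (i+1) mod 3}" "i < 3" by blast
    then have "i = 0 \<or> i = 1 \<or> i = 2" by auto
    then show "x \<noteq> y \<and> x < 3 \<and> y < 3" using i(1) by (auto simp: doubleton_eq_iff)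
  next
    assume h: "x \<noteq> y \<and> x < 3 \<and> y < 3"
    then have "(x = 0 \<or> x = 1 \<or> x = 2) \<and> (y = 0 \<or> y = 1 \<or> y = 2)" by auto
    then show "\<exists>i. {x,y} = {i, (i+1) mod 3} \<and> i < 3"
      by (elim conjE disjE)
        (use h in \<open>auto intro: exI[of _ 0] exI[of _ 1] exI[of _ 2] simp: insert_commute\<close>)
  qed
  have path: "(\<exists>i. {x,y} = {i, i+1} \<and> 3 - 1 \<le> i \<and> i + 1 < 3 + q) \<longleftrightarrow>
      2 \<le> min x y \<and> max x y < q + 3 \<and> (y = x + 1 \<or> x = y + 1)"
  proof
    assume "\<exists>i. {x,y} = {i, i+1} \<and> 3 - 1 \<le> i \<and> i + 1 < 3 + q"
    then obtain i where "{x,y} = {i, i+1}" "2 \<le> i" "i + 1 < 3 + q" by auto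
    then show "2 \<le> min x y \<and> max x y < q + 3 \<and> (y = x + 1 \<or> x = y + 1)"
      by (auto simp: doubleton_eq_iff)
  next
    assume h: "2 \<le> min x y \<and> max x y < q + 3 \<and> (y = x + 1 \<or> x = y + 1)"
    show "\<exists>i. {x,y} = {i, i+1} \<and> 3 - 1 \<le> i \<and> i + 1 < 3 + q"
    proof (cases "y = x + 1")
      case True
      then show ?thesis using h by (intro exI[of _ x]) auto
    next
      case False
      then show ?thesis using h by (intro exI[of _ y]) (auto simp: insert_commute)
    qed
  qed
  have "{x,y} \<in> tadpole_E 3 q \<longleftrightarrow> (\<exists>i. {x,y} = {i, (i+1) mod 3} \<and> i < 3) \<or>
      (\<exists>i. {x,y} = {i, i+1} \<and> 3 - 1 \<le> i \<and> i + 1 < 3 + q)"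
    unfolding tadpole_E_def by blast
  then show ?thesis unfolding triangle path by auto
qed

lemma tadpole_E_3_triangle: "x < 3 \<Longrightarrow> y < 3 \<Longrightarrow> {x,y} \<in> tadpole_E 3 q \<longleftrightarrow> x \<noteq> y"
  by (simp add: tadpole_E_3_iff)

lemma tadpole_E_3_Suc_last: "x < q + 4 \<Longrightarrow> {q+3, x} \<in> tadpole_E 3 (Suc q) \<longleftrightarrow> x = q + 2"
  by (auto simp: tadpole_E_3_iff)

lemma tadpole_E_3_Suc_restrict:
  "x < q + 3 \<Longrightarrow> y < q + 3 \<Longrightarrow> {x,y} \<in> tadpole_E 3 (Suc q) \<longleftrightarrow> {x,y} \<in> tadpole_E 3 q"
  by (auto simp: tadpole_E_3_iff)

lemma connected_tadpole: "connected_set (tadpole_E 3 q) {0..<q+3}"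
proof (induction q)
  case 0
  show ?case by (rule connected_set_clique) (auto simp: tadpole_E_3_triangle)
next
  case (Suc q)
  have "connected_set (tadpole_E 3 (Suc q)) {0..<q+3}"
    using Suc.IH connected_set_cong[of "{0..<q+3}" "tadpole_E 3 (Suc q)" "tadpole_E 3 q"]
      tadpole_E_3_Suc_restrict by simp
  moreover have "{q+3, q+2} \<in> tadpole_E 3 (Suc q)" by (simp add: tadpole_E_3_Suc_last)
  ultimately have "connected_set (tadpole_E 3 (Suc q)) (insert (q+3) {0..<q+3})"
    using connected_set_insert[of _ "{0..<q+3}" "q+2"] by simp
  moreover have "insert (q+3) {0..<q+3} = {0..<Suc q + 3}" by auto
  ultimately show ?case by simp
qed

lemma tadpole_counts:
  "2 * N_conn {0..<q+3} (tadpole_E 3 q) = q * q + 9 * q + 14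
    \<and> card (conn_supersets {0..<q+3} (tadpole_E 3 q) {q+2}) = q + 4"
proof (induction q)
  case 0
  have conn: "connected_set (tadpole_E 3 0) T" if "T \<subseteq> {0..<3}" "T \<noteq> {}" for T
    using that by (intro connected_set_clique) (auto simp: tadpole_E_3_triangle subset_eq)
  then have "conn_supersets {0..<3} (tadpole_E 3 0) {} = Pow {0..<3} - {{}}"
    unfolding conn_supersets_def connected_set_def by auto
  then have N: "2 * N_conn {0..<3} (tadpole_E 3 0) = 14"
    by (simp add: N_conn_eq_card_conn_supersets card_Diff_singleton card_Pow)
  have "conn_supersets {0..<3} (tadpole_E 3 0) {2} = insert 2 ` Pow {0..<2}"
  proof (intro equalityI subsetI)
    fix T assume "T \<in> conn_supersets {0..<3} (tadpole_E 3 0) {2}"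
    then have "T - {2} \<in> Pow {0..<2}" "T = insert 2 (T - {2})"
      unfolding conn_supersets_def by auto
    then show "T \<in> insert 2 ` Pow {0..<2}" by blast
  next
    fix T assume "T \<in> insert 2 ` Pow {0..<2::nat}"
    then have "T \<subseteq> {0..<3}" "2 \<in> T" by auto
    then show "T \<in> conn_supersets {0..<3} (tadpole_E 3 0) {2}"
      using conn[of T] unfolding conn_supersets_def by auto
  qed
  moreover have "inj_on (insert (2::nat)) (Pow {0..<2})"
    by (rule inj_onI) (subst (asm) insert_eq_iff; auto)
  ultimately have "card (conn_supersets {0..<3} (tadpole_E 3 0) {2}) = 4"
    by (simp add: card_Pow card_image)
  then show ?case using N by (simp add: numeral_2_eq_2)
next
  case (Suc q)
  let ?E = "tadpole_E 3 (Suc q)" and ?V = "{0..<Suc q+3}"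
  have V: "?V - {q+3} = {0..<q+3}" by auto
  have restrict: "conn_supersets {0..<q+3} ?E S = conn_supersets {0..<q+3} (tadpole_E 3 q) S" for S
    by (rule conn_supersets_cong) (simp add: tadpole_E_3_Suc_restrict)
  have "card (conn_supersets ?V ?E {q+3}) = 1 + card (conn_supersets (?V - {q+3}) ?E {q+2})"
    by (rule card_conn_supersets_leaf) (auto simp: tadpole_E_3_Suc_last)
  then have last: "card (conn_supersets ?V ?E {q+3}) = q + 5"
    using Suc.IH V restrict by simp
  have "N_conn ?V ?E = N_conn {0..<q+3} (tadpole_E 3 q) + card (conn_supersets ?V ?E {q+3})"
    using card_conn_supersets_split[of ?V ?E "{}" "q+3"] V restrict
    by (simp add: N_conn_eq_card_conn_supersets)
  moreover have "Suc q + 2 = q + 3" by simp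
  ultimately show ?case using Suc.IH last by (simp only:) (simp add: algebra_simps)
qed

lemma N_conn_tadpole: "2 * N_conn (tadpole_V 3 q) (tadpole_E 3 q) = q * q + 9 * q + 14"
  using tadpole_counts by (simp add: tadpole_V_3)

lemma card_conn_supersets_tadpole_inner:
  assumes "1 \<le> q" "v < q + 2"
  shows "q + 5 \<le> card (conn_supersets {0..<q+3} (tadpole_E 3 q) {v})"
proof -
  define a where "a = (if v < 2 then 2 else if v = 2 then 0 else v - 1)"
  define b where "b = (if v = 0 then 1 else if v = 1 then 0 else v + 1)"
  have ab: "a \<noteq> b" "a \<noteq> v" "b \<noteq> v" "{v,a} \<in> tadpole_E 3 q" "{v,b} \<in> tadpole_E 3 q"
    and "a < q + 3" "b < q + 3"
    using assms unfolding a_def b_def by (auto simp: tadpole_E_3_iff)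
  have "card {0..<q+3} + 2 \<le> card (conn_supersets {0..<q+3} (tadpole_E 3 q) {v})"
    by (rule card_conn_supersets_two_neighbours[OF _ connected_tadpole _ _ _ _ ab])
      (use assms \<open>a < q + 3\<close> \<open>b < q + 3\<close> in auto)
  then show ?thesis by simp
qed

lemma complete_triangle_iso:
  assumes "finite V" "card V = 3" and complete: "\<forall>a\<in>V. \<forall>b\<in>V. {a,b} \<in> E \<longleftrightarrow> a \<noteq> b"
    and "x \<in> V"
  shows "\<exists>g. bij_betw g V {0..<3} \<and> (\<forall>a\<in>V. \<forall>b\<in>V. {a,b} \<in> E \<longleftrightarrow> {g a, g b} \<in> tadpole_E 3 0)
    \<and> g x = 2"
proof -
  have "card (V - {x}) = 2" using assms(1,2,4) by simp
  then obtain h where h: "bij_betw h (V - {x}) {0..<2::nat}"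
    using ex_bij_betw_finite_nat[of "V - {x}"] assms(1) by auto
  define g where "g = h(x := 2)"
  have "bij_betw g (V - {x}) {0..<2}"
    using h by (rule bij_betw_cong[THEN iffD1, rotated]) (simp add: g_def)
  moreover have "bij_betw g {x} {2}" by (simp add: g_def)
  ultimately have "bij_betw g ((V - {x}) \<union> {x}) ({0..<2} \<union> {2})" by (rule bij_betw_combine) simp
  moreover have "(V - {x}) \<union> {x} = V" "{0..<2} \<union> {2} = {0..<3::nat}" using assms(4) by auto
  ultimately have g: "bij_betw g V {0..<3}" by simp
  have "{a,b} \<in> E \<longleftrightarrow> {g a, g b} \<in> tadpole_E 3 0" if "a \<in> V" "b \<in> V" for a b
  proof -
    have "g a < 3" "g b < 3" using g that by (auto dest: bij_betwE)
    then show ?thesis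
      using complete that bij_betw_imp_inj_on[OF g] by (auto simp: tadpole_E_3_triangle inj_on_eq_iff)
  qed
  then show ?thesis using g by (auto simp: g_def)
qed

text \<open>Only the end q + 2 of the path lies in exactly q + 4 connected sets, since every other vertex
  has two neighbours; the triangle (q = 0) is symmetric and is relabelled instead.\<close>
lemma tadpole_iso_at_end:
  assumes iso: "graph_iso V E (tadpole_V 3 q) (tadpole_E 3 q)" and "x \<in> V"
    and count: "card (conn_supersets V E {x}) = q + 4"
  shows "\<exists>g. bij_betw g V {0..<q+3} \<and> (\<forall>a\<in>V. \<forall>b\<in>V. {a,b} \<in> E \<longleftrightarrow> {g a, g b} \<in> tadpole_E 3 q)
    \<and> g x = q + 2"
proof -
  obtain g where g: "bij_betw g V {0..<q+3}"
    and edges: "\<forall>a\<in>V. \<forall>b\<in>V. {a,b} \<in> E \<longleftrightarrow> {g a, g b} \<in> tadpole_E 3 q"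
    using iso unfolding graph_iso_def tadpole_V_3 by blast
  have gx: "g x < q + 3" using g \<open>x \<in> V\<close> by (auto dest: bij_betwE)
  show ?thesis
  proof (cases "q = 0")
    case True
    have "finite V" "card V = 3" using g True by (auto simp: bij_betw_finite bij_betw_same_card)
    moreover have "\<forall>a\<in>V. \<forall>b\<in>V. {a,b} \<in> E \<longleftrightarrow> a \<noteq> b"
    proof (intro ballI)
      fix a b assume "a \<in> V" "b \<in> V"
      moreover have "g a < 3" "g b < 3" using g True \<open>a \<in> V\<close> \<open>b \<in> V\<close> by (auto dest: bij_betwE)
      ultimately show "{a,b} \<in> E \<longleftrightarrow> a \<noteq> b"
        using edges True bij_betw_imp_inj_on[OF g] by (auto simp: tadpole_E_3_triangle inj_on_eq_iff)
    qed
    ultimately have "\<exists>g. bij_betw g V {0..<3}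
        \<and> (\<forall>a\<in>V. \<forall>b\<in>V. {a,b} \<in> E \<longleftrightarrow> {g a, g b} \<in> tadpole_E 3 0) \<and> g x = 2"
      by (rule complete_triangle_iso[OF _ _ _ \<open>x \<in> V\<close>])
    then show ?thesis unfolding True by (simp add: numeral_2_eq_2)
  next
    case False
    have "card (conn_supersets {0..<q+3} (tadpole_E 3 q) {g x}) = q + 4"
      using card_conn_supersets_iso[OF g edges, of "{x}"] \<open>x \<in> V\<close> count by simp
    then have "g x = q + 2" using card_conn_supersets_tadpole_inner[of q "g x"] False gx by linarith
    then show ?thesis using g edges by blast
  qed
qed

lemma graph_iso_tadpole_Suc:
  assumes g: "bij_betw g (V - {w}) {0..<q+3}"
    and edges: "\<forall>a\<in>V - {w}. \<forall>b\<in>V - {w}. {a,b} \<in> E \<longleftrightarrow> {g a, g b} \<in> tadpole_E 3 q"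
    and "w \<in> V" "x \<in> V - {w}" "g x = q + 2" and leaf: "\<forall>y\<in>V. {w,y} \<in> E \<longleftrightarrow> y = x"
  shows "graph_iso V E (tadpole_V 3 (Suc q)) (tadpole_E 3 (Suc q))"
proof -
  define h where "h = g(w := q + 3)"
  have "bij_betw h (V - {w}) {0..<q+3}"
    using g by (rule bij_betw_cong[THEN iffD1, rotated]) (simp add: h_def)
  moreover have "bij_betw h {w} {q+3}" by (simp add: h_def)
  ultimately have "bij_betw h ((V - {w}) \<union> {w}) ({0..<q+3} \<union> {q+3})" by (rule bij_betw_combine) simp
  moreover have "(V - {w}) \<union> {w} = V" "{0..<q+3} \<union> {q+3} = {0..<Suc q + 3}" using \<open>w \<in> V\<close> by auto
  ultimately have h: "bij_betw h V {0..<Suc q + 3}" by simp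
  have lt: "g a < q + 3" if "a \<in> V - {w}" for a using g that by (auto dest: bij_betwE)
  have to_w: "{w,b} \<in> E \<longleftrightarrow> {h w, h b} \<in> tadpole_E 3 (Suc q)" if "b \<in> V" for b
  proof (cases "b = w")
    case True
    then show ?thesis
      using leaf \<open>x \<in> V - {w}\<close> \<open>w \<in> V\<close> tadpole_E_3_iff[of "h w" "h w" "Suc q"] by auto
  next
    case False
    then have "{w,b} \<in> E \<longleftrightarrow> g b = g x"
      using leaf that \<open>x \<in> V - {w}\<close> bij_betw_imp_inj_on[OF g] by (auto simp: inj_on_eq_iff)
    also have "\<dots> \<longleftrightarrow> {h w, h b} \<in> tadpole_E 3 (Suc q)"
      using False lt[of b] that \<open>g x = q + 2\<close> by (simp add: h_def tadpole_E_3_Suc_last)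
    finally show ?thesis .
  qed
  have "{a,b} \<in> E \<longleftrightarrow> {h a, h b} \<in> tadpole_E 3 (Suc q)" if "a \<in> V" "b \<in> V" for a b
  proof (cases "a = w \<or> b = w")
    case True
    then show ?thesis using to_w[of a] to_w[of b] that by (auto simp: insert_commute)
  next
    case False
    then show ?thesis
      using edges that lt[of a] lt[of b] by (simp add: h_def tadpole_E_3_Suc_restrict)
  qed
  then show ?thesis using h unfolding graph_iso_def tadpole_V_3 by blast
qed


lemma graph_iso_tadpole_add_leaf:
  assumes iso: "graph_iso (V - {w}) {e\<in>E. w \<notin> e} (tadpole_V 3 q) (tadpole_E 3 q)"
    and "finite V" "w \<in> V" "x \<in> V - {w}" and leaf: "\<forall>y\<in>V. {w,y} \<in> E \<longleftrightarrow> y = x"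
    and count: "card (conn_supersets V E {w}) = q + 5"
  shows "graph_iso V E (tadpole_V 3 (Suc q)) (tadpole_E 3 (Suc q))"
proof -
  let ?E = "{e\<in>E. w \<notin> e}"
  have "card (conn_supersets V E {w}) = 1 + card (conn_supersets (V - {w}) E {x})"
    by (rule card_conn_supersets_leaf) (use assms(2-4) leaf in \<open>auto simp: insert_commute\<close>)
  also have "conn_supersets (V - {w}) E {x} = conn_supersets (V - {w}) ?E {x}"
    by (rule conn_supersets_cong) auto
  finally have "card (conn_supersets (V - {w}) ?E {x}) = q + 4" using count by simp
  with tadpole_iso_at_end[OF iso \<open>x \<in> V - {w}\<close>] obtain g where g: "bij_betw g (V - {w}) {0..<q+3}"
    and edges: "\<forall>a\<in>V - {w}. \<forall>b\<in>V - {w}. {a,b} \<in> ?E \<longleftrightarrow> {g a, g b} \<in> tadpole_E 3 q"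
    and "g x = q + 2"
    by blast
  have "\<forall>a\<in>V - {w}. \<forall>b\<in>V - {w}. {a,b} \<in> E \<longleftrightarrow> {g a, g b} \<in> tadpole_E 3 q"
    using edges by auto
  then show ?thesis
    by (rule graph_iso_tadpole_Suc[OF g _ \<open>w \<in> V\<close> \<open>x \<in> V - {w}\<close> \<open>g x = q + 2\<close> leaf])
qed

section \<open>Unicyclic graphs\<close>

lemma cycle_graph_triangle_iso:
  assumes sg: "simple_graph V E" and cyc: "is_cycle E F" and VC: "\<Union>F = V" and "card V = 3"
  shows "graph_iso V E (tadpole_V 3 0) (tadpole_E 3 0)"
proof -
  have "finite V" using simple_graph_finite[OF sg] .
  moreover have "\<forall>a\<in>V. \<forall>b\<in>V. {a,b} \<in> E \<longleftrightarrow> a \<noteq> b"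
    using cycle_graph_triangle_complete[OF assms] by blast
  moreover obtain x where "x \<in> V" using \<open>card V = 3\<close> by fastforce
  ultimately have "\<exists>g. bij_betw g V {0..<3}
      \<and> (\<forall>a\<in>V. \<forall>b\<in>V. {a,b} \<in> E \<longleftrightarrow> {g a, g b} \<in> tadpole_E 3 0) \<and> g x = 2"
    using \<open>card V = 3\<close> by (intro complete_triangle_iso)
  then show ?thesis unfolding graph_iso_def tadpole_V_3 by auto
qed

lemma unicyclic_remove_vertex:
  assumes uni: "unicyclic V E" and cyc: "is_cycle E F" and "w \<notin> \<Union>F"
    and conn: "connected_set E (V - {w})"
  shows "unicyclic (V - {w}) {e\<in>E. w \<notin> e}"
proof -
  let ?E = "{e\<in>E. w \<notin> e}"
  have sg: "simple_graph V E" using uni unfolding unicyclic_def by simp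
  have "simple_graph (V - {w}) ?E"
    unfolding simple_graph_def
  proof (intro conjI ballI)
    show "finite (V - {w})" using simple_graph_finite[OF sg] by simp
    fix e assume e: "e \<in> ?E"
    then have "e \<in> E" by simp
    then obtain u v where "e = {u,v}" "u \<noteq> v" "u \<in> V" "v \<in> V"
      using sg unfolding simple_graph_def by blast
    then show "\<exists>u v. e = {u,v} \<and> u \<noteq> v \<and> u \<in> V - {w} \<and> v \<in> V - {w}" using e by auto
  qed
  moreover have "connected_set ?E (V - {w})" using conn connected_set_cong[of "V - {w}" E ?E] by auto
  moreover have "F \<subseteq> ?E" using is_cycleD(1)[OF cyc] \<open>w \<notin> \<Union>F\<close> by blast
  then have "is_cycle ?E F" by (rule is_cycle_mono_edges[OF cyc])
  moreover have "G = F" if "is_cycle ?E G" for G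
  proof -
    have "is_cycle E G" by (rule is_cycle_mono_edges[OF that]) (use is_cycleD(1)[OF that] in auto)
    then show ?thesis using cyc uni unfolding unicyclic_def by blast
  qed
  ultimately show ?thesis unfolding unicyclic_def by (intro conjI ex1I)
qed

lemma unicyclic_remove_vertex_off_cycle:
  assumes uni: "unicyclic V E" and cyc: "is_cycle E F" and "\<Union>F \<noteq> V"
  obtains w where "w \<in> V" "unicyclic (V - {w}) {e\<in>E. w \<notin> e}" "3 \<le> card (V - {w})"
    "N_conn V E = N_conn (V - {w}) {e\<in>E. w \<notin> e} + card (conn_supersets V E {w})"
proof -
  have sg: "simple_graph V E" and conn: "connected_set E V" using uni unfolding unicyclic_def by auto
  have fin: "finite V" using simple_graph_finite[OF sg] .
  obtain w where w: "w \<in> V" "w \<notin> \<Union>F" "connected_set E (V - {w})"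
    using exists_noncut_vertex[OF fin conn cycle_subset[OF sg cyc]] connected_set_mono_edges
      is_cycleD(1,3)[OF cyc] \<open>\<Union>F \<noteq> V\<close> by blast
  have "3 \<le> card (\<Union>F)" using cycle_card[OF sg cyc] .
  also have "\<dots> \<le> card (V - {w})"
    using cycle_subset[OF sg cyc] w(2) fin by (intro card_mono) auto
  finally have "3 \<le> card (V - {w})" .
  moreover have "conn_supersets (V - {w}) E {} = conn_supersets (V - {w}) {e\<in>E. w \<notin> e} {}"
    by (rule conn_supersets_cong) auto
  then have "N_conn V E = N_conn (V - {w}) {e\<in>E. w \<notin> e} + card (conn_supersets V E {w})"
    using card_conn_supersets_split[OF fin, of E "{}" w] by (simp add: N_conn_eq_card_conn_supersets)
  ultimately show ?thesis using that w unicyclic_remove_vertex[OF uni cyc w(2,3)] by blast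
qed

lemma N_conn_unicyclic_lower_bound:
  assumes "unicyclic V E" "3 \<le> card V"
  shows "card V * card V + 3 * card V \<le> 2 * N_conn V E + 4"
  using assms
proof (induction "card V" arbitrary: V E rule: less_induct)
  case less
  have sg: "simple_graph V E" and conn: "connected_set E V"
    using less.prems(1) unfolding unicyclic_def by auto
  obtain F where cyc: "is_cycle E F" using less.prems(1) unfolding unicyclic_def by auto
  show ?case
  proof (cases "\<Union>F = V")
    case True
    show ?thesis
    proof (cases "card V = 3")
      case True
      then have "N_conn V E = 7"
        using N_conn_iso[OF cycle_graph_triangle_iso[OF sg cyc \<open>\<Union>F = V\<close>]] N_conn_tadpole[of 0] by simp
      then show ?thesis using True by simp
    next
      case False
      then show ?thesis using N_conn_cycle_graph_lower_bound[OF sg cyc \<open>\<Union>F = V\<close>] less.prems(2) by simp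
    qed
  next
    case False
    then obtain w where w: "w \<in> V" "unicyclic (V - {w}) {e\<in>E. w \<notin> e}" "3 \<le> card (V - {w})"
      and split: "N_conn V E = N_conn (V - {w}) {e\<in>E. w \<notin> e} + card (conn_supersets V E {w})"
      using unicyclic_remove_vertex_off_cycle[OF less.prems(1) cyc] by blast
    have card: "card V = card (V - {w}) + 1"
      using card_Suc_Diff1[OF simple_graph_finite[OF sg] w(1)] by simp
    have "card (V - {w}) * card (V - {w}) + 3 * card (V - {w}) \<le> 2 * N_conn (V - {w}) {e\<in>E. w \<notin> e} + 4"
      using less.hyps[of "V - {w}"] w(2,3) card by simp
    moreover have "card V + 1 \<le> card (conn_supersets V E {w})"
      using card_conn_supersets_cycle_graph[OF sg conn cyc w(1)] .
    ultimately show ?thesis using split card by (simp add: algebra_simps)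
  qed
qed

lemma unicyclic_N_conn_eq_imp_tadpole:
  assumes "unicyclic V E" "3 \<le> card V" "card V * card V + 3 * card V = 2 * N_conn V E + 4"
  shows "graph_iso V E (tadpole_V 3 (card V - 3)) (tadpole_E 3 (card V - 3))"
  using assms
proof (induction "card V" arbitrary: V E rule: less_induct)
  case less
  have sg: "simple_graph V E" and conn: "connected_set E V"
    using less.prems(1) unfolding unicyclic_def by auto
  have fin: "finite V" using simple_graph_finite[OF sg] .
  obtain F where cyc: "is_cycle E F" using less.prems(1) unfolding unicyclic_def by auto
  show ?case
  proof (cases "\<Union>F = V")
    case True
    then have "card V = 3"
      using N_conn_cycle_graph_lower_bound[OF sg cyc] less.prems(2,3) by fastforce
    then show ?thesis using cycle_graph_triangle_iso[OF sg cyc True] by simp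
  next
    case False
    let ?E = "\<lambda>w. {e\<in>E. w \<notin> e}"
    obtain w where w: "w \<in> V" "unicyclic (V - {w}) (?E w)" "3 \<le> card (V - {w})"
      and split: "N_conn V E = N_conn (V - {w}) (?E w) + card (conn_supersets V E {w})"
      using unicyclic_remove_vertex_off_cycle[OF less.prems(1) cyc False] by blast
    have card: "card V = card (V - {w}) + 1" using card_Suc_Diff1[OF fin w(1)] by simp
    have "card (V - {w}) * card (V - {w}) + 3 * card (V - {w}) \<le> 2 * N_conn (V - {w}) (?E w) + 4"
      using N_conn_unicyclic_lower_bound w(2,3) .
    moreover have "card V + 1 \<le> card (conn_supersets V E {w})"
      using card_conn_supersets_cycle_graph[OF sg conn cyc w(1)] .
    ultimately have eq: "card (V - {w}) * card (V - {w}) + 3 * card (V - {w})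
          = 2 * N_conn (V - {w}) (?E w) + 4"
      and count: "card (conn_supersets V E {w}) = card V + 1"
      using less.prems(3) split card by (simp_all add: algebra_simps)
    obtain x where "x \<in> V - {w}" "\<forall>y\<in>V. {w,y} \<in> E \<longleftrightarrow> y = x"
      using conn_supersets_few_imp_leaf[OF sg conn _ w(1)] w(3) card count by auto
    moreover have "graph_iso (V - {w}) (?E w) (tadpole_V 3 (card V - 4)) (tadpole_E 3 (card V - 4))"
      using less.hyps[of "V - {w}" "?E w"] w(2,3) eq card by simp
    ultimately have "graph_iso V E (tadpole_V 3 (Suc (card V - 4))) (tadpole_E 3 (Suc (card V - 4)))"
      using graph_iso_tadpole_add_leaf[OF _ fin w(1)] count w(3) card by simp
    moreover have "Suc (card V - 4) = card V - 3" using card w(3) by simp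
    ultimately show ?thesis by simp
  qed
qed

theorem mainTheorem7:
  fixes V :: "'a set" and E :: "'a set set" and n :: nat
  assumes "unicyclic V E" and "n = card V" and "n \<ge> 3"
  shows "real (N_conn V E) \<ge> (real n ^ 2 + 3 * real n - 4) / 2
     \<and> (real (N_conn V E) = (real n ^ 2 + 3 * real n - 4) / 2
          \<longleftrightarrow> graph_iso V E (tadpole_V 3 (n - 3)) (tadpole_E 3 (n - 3)))"
proof -
  have bound: "n * n + 3 * n \<le> 2 * N_conn V E + 4"
    using N_conn_unicyclic_lower_bound assms by simp
  have "n * n + 3 * n = 2 * N_conn V E + 4
      \<longleftrightarrow> graph_iso V E (tadpole_V 3 (n - 3)) (tadpole_E 3 (n - 3))"
  proof
    assume "graph_iso V E (tadpole_V 3 (n - 3)) (tadpole_E 3 (n - 3))"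
    then have "2 * N_conn V E = (n - 3) * (n - 3) + 9 * (n - 3) + 14"
      using N_conn_iso N_conn_tadpole by metis
    moreover obtain k where "n = k + 3" using \<open>n \<ge> 3\<close> le_Suc_ex by (metis add.commute)
    ultimately show "n * n + 3 * n = 2 * N_conn V E + 4" by (simp add: algebra_simps)
  qed (use unicyclic_N_conn_eq_imp_tadpole assms in simp)
  moreover have "real (N_conn V E) = (real n ^ 2 + 3 * real n - 4) / 2
      \<longleftrightarrow> real (n * n + 3 * n) = real (2 * N_conn V E + 4)"
    by (simp add: power2_eq_square) linarith
  moreover have "real (n * n + 3 * n) \<le> real (2 * N_conn V E + 4)"
    using bound by (simp only: of_nat_le_iff)
  ultimately show ?thesis by (simp only: of_nat_eq_iff) (simp add: power2_eq_square)
qed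

end
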